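(* Let $0<\lambda,\lambda'<1$ and $0<\beta,\beta'<1$. Then $\mathcal{B}'(\lambda',\beta')\cong\mathcal{B}'(\lambda,\beta)$ as $\mathbb{R}$-algebras if and only if $\lambda'=\lambda$ and $\beta'\in\{\beta,1-\beta\}$. In particular, two algebras with $(\lambda',\beta')\neq(\lambda,\beta)$ are isomorphic if and only if $\lambda'=\lambda$ and $\beta'=1-\beta$.
   Context: For real parameters $0<\lambda<1$ and $0<\beta<1$, $\mathcal{B}'(\lambda,\beta)$ denotes the commutative (non-associative) $4$-dimensional real algebra with basis $\{o,a,b,c\}$ whose bilinear commutative multiplication $\circ$ is determined by $o\circ o=o$, $o\circ a=\lambda a$, $o\circ b=\lambda b$, $a\circ a=a$, $b\circ b=b$, $a\circ b=\frac{\lambda-\beta}{\lambda}a+\frac{\lambda+\beta-1}{\lambda}b+c$, and $c\circ x=x\circ c=0$ for every $x$. (In the paper the basis vector $c$ is written $ab$.) *)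

theory Defs
  imports "HOL-Analysis.Analysis"
begin

text \<open>Vectors of the algebra B'(l,b) are elements of real^4, with coordinates
  (x$1, x$2, x$3, x$4) w.r.t. the basis (o, a, b, c).\<close>

definition Bmult :: "real \<Rightarrow> real \<Rightarrow> real^4 \<Rightarrow> real^4 \<Rightarrow> real^4" where
  "Bmult l b x y = vector
     [ x$1 * y$1,
       l * (x$1 * y$2 + x$2 * y$1) + x$2 * y$2 + ((l - b) / l) * (x$2 * y$3 + x$3 * y$2),
       l * (x$1 * y$3 + x$3 * y$1) + x$3 * y$3 + ((l + b - 1) / l) * (x$2 * y$3 + x$3 * y$2),
       x$2 * y$3 + x$3 * y$2 ]"

definition alg_iso :: "('a::real_vector \<Rightarrow> 'a \<Rightarrow> 'a) \<Rightarrow> ('b::real_vector \<Rightarrow> 'b \<Rightarrow> 'b) \<Rightarrow> bool" where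
  "alg_iso m1 m2 \<longleftrightarrow> (\<exists>f. linear f \<and> bij f \<and> (\<forall>x y. f (m1 x y) = m2 (f x) (f y)))"

end

theory Submission
  imports Defs
begin

(* Write p = (l-b)/l and q = (l+b-1)/l, so that a*b = p a + q b + c and p + q = 2 - 1/l < 1.
   The swap a <-> b of basis vectors is an isomorphism B'(l,1-b) ~ B'(l,b), which gives
   the "if" direction.  For "only if", fix an isomorphism f : B'(l',b') -> B'(l,b) and look
   at the images of o, a, b, c (locale iso_Bmult):
   - f c lies in the annihilator of B'(l,b), which is spanned by c;
   - the first coordinate is multiplicative, which forces f o to have first coordinate 1
     and f a, f b to have first coordinate 0;
   - injectivity then makes the (a,b)-parts of f a and f b linearly independent;
   - left multiplication by f o acts as l' on span(f a, f b); an elementary case analysis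
     on the idempotent f o (lemma unit_action_eigenvalue) gives l' = l;
   - comparing the idempotents f a, f b and their product (lemma idempotent_pair_coefficient)
     gives q' = (l'+b'-1)/l' in {p, q}, i.e. b' in {b, 1-b}. *)

text \<open>If o + u a + w b (modulo c) is idempotent in B'(l,b) and its left multiplication acts on
  the (a,b)-plane as l' times the identity, then l' = l.  The hypotheses are the a- and
  b-coordinates of the idempotency and the entries of the matrix of the action.\<close>

lemma unit_action_eigenvalue:
  fixes l l' p q u w :: real
  assumes l: "0 < l" "l < 1" and pq: "p + q = (2*l - 1) / l"
    and idem_u: "u = 2*l*u + u*u + 2*p*u*w" and idem_v: "w = 2*l*w + w*w + 2*q*u*w"
    and diag_a: "l + u + p*w = l'" and off_a: "p*u = 0"
    and off_b: "q*w = 0" and diag_b: "l + w + q*u = l'"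
  shows "l' = l"
proof -
  have pq_lt1: "p + q < 1" using pq l by (simp add: divide_less_eq)
  have u_cases: "u = 0 \<or> u = 1 - 2*l"
  proof -
    have "2*p*u*w = 0" using off_a by simp
    with idem_u have "u = 2*l*u + u*u" by linarith
    then have "u * (1 - 2*l - u) = 0" by (simp add: algebra_simps)
    then show ?thesis by auto
  qed
  consider "u = 0" "w = 0" | "u = 0" "w \<noteq> 0" | "u \<noteq> 0" "w = 0" | "u \<noteq> 0" "w \<noteq> 0"
    by blast
  then show ?thesis
  proof cases
    case 1
    with diag_a show ?thesis by simp
  next
    case 2
    then have "q = 0" "p * w = w" using off_b diag_a diag_b by auto
    with \<open>w \<noteq> 0\<close> pq_lt1 show ?thesis by simp
  next
    case 3
    then have "p = 0" "q * u = u" using off_a diag_a diag_b by auto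
    with \<open>u \<noteq> 0\<close> pq_lt1 show ?thesis by simp
  next
    case 4
    then have "p = 0" "q = 0" using off_a off_b by auto
    with pq l have "l = 1/2" by (simp add: field_simps)
    with u_cases \<open>u \<noteq> 0\<close> show ?thesis by simp
  qed
qed

text \<open>An idempotent x a + y b (modulo c) of B'(l,b) with x, y both nonzero lies on the line
  x + 2p y = 1, y + 2q x = 1.  Two linearly independent such idempotents force this
  linear system to be degenerate, which only happens for p = q = 1/2.\<close>

lemma two_generic_idempotents:
  fixes p q a2 a3 b2 b3 :: real
  assumes A2: "a2 + 2*p*a3 = 1" and A3: "a3 + 2*q*a2 = 1"
    and B2: "b2 + 2*p*b3 = 1" and B3: "b3 + 2*q*b2 = 1"
    and indep: "a2*b3 - a3*b2 \<noteq> 0"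
  shows "p = 1/2 \<and> q = 1/2"
proof -
  have d2: "a2 - b2 = -2*p*(a3 - b3)" and d3: "a3 - b3 = -2*q*(a2 - b2)"
    using A2 B2 A3 B3 by (simp_all add: algebra_simps)
  have "a3 \<noteq> b3"
  proof
    assume "a3 = b3"
    with d2 have "a2 = b2" by simp
    with \<open>a3 = b3\<close> indep show False by (simp add: mult.commute)
  qed
  have "(a3 - b3) * (1 - 4*p*q) = 0"
    using d3 by (subst (asm) d2) (simp add: algebra_simps)
  with \<open>a3 \<noteq> b3\<close> have pq: "4*p*q = 1" by simp
  have "2*p = 2*p*(a3 + 2*q*a2)" using A3 by simp
  also have "\<dots> = 2*p*a3 + (4*p*q)*a2" by (simp add: algebra_simps)
  finally have "2*p = 1" using pq A2 by simp
  have "2*q = (2*p)*(2*q)" using \<open>2*p = 1\<close> by simp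
  also have "\<dots> = 1" using pq by simp
  finally have "2*q = 1" .
  with \<open>2*p = 1\<close> show ?thesis by simp
qed

text \<open>Let x, y be idempotents of B'(l,b) without o-component, with linearly independent
  (a,b)-parts, and with x y = p' x + q' y modulo c, where p' + q' = p + q.  If x or y has a vanishing coordinate it is a or b and q' can be read
  off directly; otherwise two_generic_idempotents contradicts p + q < 1.\<close>

lemma idempotent_pair_coefficient:
  fixes p q p' q' a2 a3 b2 b3 :: real
  assumes idem_a2: "a2 = a2*a2 + p*(a2*a3 + a3*a2)" and idem_a3: "a3 = a3*a3 + q*(a2*a3 + a3*a2)"
    and idem_b2: "b2 = b2*b2 + p*(b2*b3 + b3*b2)" and idem_b3: "b3 = b3*b3 + q*(b2*b3 + b3*b2)"
    and prod2: "a2*b2 + p*(a2*b3 + a3*b2) = p'*a2 + q'*b2"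
    and prod3: "a3*b3 + q*(a2*b3 + a3*b2) = p'*a3 + q'*b3"
    and sum: "p' + q' = p + q" and pq_lt1: "p + q < 1" and indep: "a2*b3 - a3*b2 \<noteq> 0"
  shows "q' = q \<or> q' = p"
proof -
  have a2: "a2 = 0 \<or> a2 + 2*p*a3 = 1" and a3: "a3 = 0 \<or> a3 + 2*q*a2 = 1"
    and b2: "b2 = 0 \<or> b2 + 2*p*b3 = 1" and b3: "b3 = 0 \<or> b3 + 2*q*b2 = 1"
  proof -
    have "a2 * (a2 + 2*p*a3 - 1) = 0" "a3 * (a3 + 2*q*a2 - 1) = 0"
      "b2 * (b2 + 2*p*b3 - 1) = 0" "b3 * (b3 + 2*q*b2 - 1) = 0"
      using idem_a2 idem_a3 idem_b2 idem_b3 by (simp_all add: algebra_simps)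
    then show "a2 = 0 \<or> a2 + 2*p*a3 = 1" "a3 = 0 \<or> a3 + 2*q*a2 = 1"
      "b2 = 0 \<or> b2 + 2*p*b3 = 1" "b3 = 0 \<or> b3 + 2*q*b2 = 1" by auto
  qed
  show ?thesis
  proof (cases "a2 = 0 \<or> a3 = 0 \<or> b2 = 0 \<or> b3 = 0")
    case True
    then consider "a2 = 0" | "a2 \<noteq> 0" "a3 = 0" | "a2 \<noteq> 0" "b2 = 0" | "a3 \<noteq> 0" "b3 = 0"
      by blast
    then show ?thesis
    proof cases
      case 1
      with indep a3 have "b2 \<noteq> 0" "a3 = 1" by auto
      with 1 prod2 show ?thesis by simp
    next
      case 2
      with indep a2 have "b3 \<noteq> 0" "a2 = 1" by auto
      with 2 prod3 show ?thesis by simp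
    next
      case 3
      with indep b3 have "b3 = 1" by auto
      with 3 prod2 sum show ?thesis by simp
    next
      case 4
      with indep b2 have "b2 = 1" by auto
      with 4 prod3 sum show ?thesis by simp
    qed
  next
    case False
    with a2 a3 b2 b3 two_generic_idempotents[OF _ _ _ _ indep] have "p = 1/2 \<and> q = 1/2"
      by blast
    with pq_lt1 show ?thesis by simp
  qed
qed

lemma cramer_2x2_homogeneous:
  fixes m n a2 a3 b2 b3 :: "'a::field"
  assumes "a2*b3 - a3*b2 \<noteq> 0" "m*a2 + n*a3 = 0" "m*b2 + n*b3 = 0"
  shows "m = 0 \<and> n = 0"
proof -
  have "m * (a2*b3 - a3*b2) = b3 * (m*a2 + n*a3) - a3 * (m*b2 + n*b3)"
    "n * (a2*b3 - a3*b2) = a2 * (m*b2 + n*b3) - b2 * (m*a2 + n*a3)"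
    by (simp_all add: algebra_simps)
  with assms(2,3) have "m * (a2*b3 - a3*b2) = 0" "n * (a2*b3 - a3*b2) = 0" by simp_all
  with assms(1) show ?thesis by simp
qed

section \<open>Coordinates in B'(l,b)\<close>

text \<open>The coefficients of a and b in the product a*b.\<close>

definition coef_a :: "real \<Rightarrow> real \<Rightarrow> real" where "coef_a l b = (l - b) / l"
definition coef_b :: "real \<Rightarrow> real \<Rightarrow> real" where "coef_b l b = (l + b - 1) / l"

lemma coef_sum: "0 < l \<Longrightarrow> coef_a l b + coef_b l b = (2*l - 1) / l"
  by (simp add: coef_a_def coef_b_def field_simps)

lemma coef_sum_lt1: "0 < l \<Longrightarrow> l < 1 \<Longrightarrow> coef_a l b + coef_b l b < 1"
  by (simp add: coef_sum)

lemma vector_4_nth [simp]: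
  "(vector [x, y, z, w] :: 'a::zero^4)$1 = x" "(vector [x, y, z, w] :: 'a::zero^4)$2 = y"
  "(vector [x, y, z, w] :: 'a::zero^4)$3 = z" "(vector [x, y, z, w] :: 'a::zero^4)$4 = w"
  unfolding vector_def by simp_all

lemma Bmult_nth [simp]:
  "(Bmult l b x y)$1 = x$1 * y$1"
  "(Bmult l b x y)$2 = l * (x$1 * y$2 + x$2 * y$1) + x$2 * y$2 + coef_a l b * (x$2 * y$3 + x$3 * y$2)"
  "(Bmult l b x y)$3 = l * (x$1 * y$3 + x$3 * y$1) + x$3 * y$3 + coef_b l b * (x$2 * y$3 + x$3 * y$2)"
  "(Bmult l b x y)$4 = x$2 * y$3 + x$3 * y$2"
  by (simp_all add: Bmult_def coef_a_def coef_b_def)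

definition vo :: "real^4" where "vo = vector [1, 0, 0, 0]"
definition va :: "real^4" where "va = vector [0, 1, 0, 0]"
definition vb :: "real^4" where "vb = vector [0, 0, 1, 0]"
definition vc :: "real^4" where "vc = vector [0, 0, 0, 1]"

lemma basis_nth [simp]:
  "vo$1 = 1" "vo$2 = 0" "vo$3 = 0" "vo$4 = 0"
  "va$1 = 0" "va$2 = 1" "va$3 = 0" "va$4 = 0"
  "vb$1 = 0" "vb$2 = 0" "vb$3 = 1" "vb$4 = 0"
  "vc$1 = 0" "vc$2 = 0" "vc$3 = 0" "vc$4 = 1"
  by (simp_all add: vo_def va_def vb_def vc_def)

lemma basis_expansion: "(x::real^4) = x$1 *\<^sub>R vo + x$2 *\<^sub>R va + x$3 *\<^sub>R vb + x$4 *\<^sub>R vc"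
  by (simp add: vec_eq_iff forall_4)

lemma Bmult_basis:
  "Bmult l b vo vo = vo"
  "Bmult l b vo va = l *\<^sub>R va"
  "Bmult l b vo vb = l *\<^sub>R vb"
  "Bmult l b va va = va"
  "Bmult l b vb vb = vb"
  "Bmult l b va vb = coef_a l b *\<^sub>R va + coef_b l b *\<^sub>R vb + vc"
  "Bmult l b vc z = 0"
  by (simp_all add: vec_eq_iff forall_4)

text \<open>Anything killed by o lies on the line spanned by c; in particular the annihilator of
  B'(l,b) is spanned by c.\<close>

lemma Bmult_vo_zero: "0 < l \<Longrightarrow> Bmult l b x vo = 0 \<Longrightarrow> x$1 = 0 \<and> x$2 = 0 \<and> x$3 = 0"
  by (auto simp: vec_eq_iff forall_4)

lemma iso_refl: "alg_iso (Bmult l b) (Bmult l b)"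
  unfolding alg_iso_def by (rule exI[of _ id]) (simp add: linear_id)

lemma iso_swap:
  assumes "0 < l"
  shows "alg_iso (Bmult l (1 - b)) (Bmult l b)"
proof -
  define g :: "real^4 \<Rightarrow> real^4" where "g x = vector [x$1, x$3, x$2, x$4]" for x
  have "linear g"
    by (rule linearI) (simp_all add: g_def vec_eq_iff forall_4)
  moreover have "bij g"
  proof -
    have "g \<circ> g = id" by (rule ext) (simp add: g_def vec_eq_iff forall_4)
    then show ?thesis using o_bij by blast
  qed
  moreover have "\<forall>x y. g (Bmult l (1 - b) x y) = Bmult l b (g x) (g y)"
    using assms by (simp add: g_def vec_eq_iff forall_4 coef_a_def coef_b_def algebra_simps)
  ultimately show ?thesis unfolding alg_iso_def by blast
qed

section \<open>Invariants of an isomorphism B'(l',b') \<rightarrow> B'(l,b)\<close>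

locale iso_Bmult =
  fixes l b l' b' :: real and f :: "real^4 \<Rightarrow> real^4"
  assumes l_pos: "0 < l" and l_lt1: "l < 1" and l'_pos: "0 < l'" and l'_lt1: "l' < 1"
    and lin: "linear f" and bij: "bij f"
    and hom: "\<And>x y. f (Bmult l' b' x y) = Bmult l b (f x) (f y)"
begin

abbreviation "fo \<equiv> f vo"
abbreviation "fa \<equiv> f va"
abbreviation "fb \<equiv> f vb"
abbreviation "fc \<equiv> f vc"
abbreviation "p \<equiv> coef_a l b"
abbreviation "q \<equiv> coef_b l b"

lemma f_scale: "f (r *\<^sub>R x) = r *\<^sub>R f x"
  using lin by (simp add: linear_scale)

lemma f_expansion: "f z = z$1 *\<^sub>R fo + z$2 *\<^sub>R fa + z$3 *\<^sub>R fb + z$4 *\<^sub>R fc"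
  by (subst basis_expansion) (simp add: lin linear_add f_scale)

lemma image_table:
  "Bmult l b fo fo = fo" "Bmult l b fo fa = l' *\<^sub>R fa" "Bmult l b fo fb = l' *\<^sub>R fb"
  "Bmult l b fa fa = fa" "Bmult l b fb fb = fb"
  "Bmult l b fa fb = coef_a l' b' *\<^sub>R fa + coef_b l' b' *\<^sub>R fb + fc"
  using hom[of vo vo] hom[of vo va] hom[of vo vb] hom[of va va] hom[of vb vb] hom[of va vb]
  by (simp_all add: Bmult_basis f_scale lin linear_add)

text \<open>f c is annihilated by f(f^-1 o) = o, hence lies on the line of c.\<close>

lemma fc_coords: "fc$1 = 0" "fc$2 = 0" "fc$3 = 0"
proof -
  obtain z where z: "f z = vo" using bij by (metis bij_def surjD)
  have "Bmult l b fc vo = 0"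
    using hom[of vc z] z by (simp add: Bmult_basis lin linear_0)
  then show "fc$1 = 0" "fc$2 = 0" "fc$3 = 0" using Bmult_vo_zero l_pos by blast+
qed

text \<open>The first coordinate is a multiplicative functional, so it takes the values 0 or 1 on
  idempotents; the relation o*a = l' a with 0 < l' < 1 and surjectivity pin them down.\<close>

lemma first_coords: "fo$1 = 1" "fa$1 = 0" "fb$1 = 0"
proof -
  have idem01: "x$1 = 0 \<or> x$1 = 1" if "Bmult l b x x = x" for x
    using arg_cong[OF that, of "\<lambda>v. v$1"] by auto
  have fo01: "fo$1 = 0 \<or> fo$1 = 1" by (rule idem01) (rule image_table(1))
  have eigen: "fo$1 * x$1 = l' * x$1" if "Bmult l b fo x = l' *\<^sub>R x" for x
    using arg_cong[OF that, of "\<lambda>v. v$1"] by simp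
  have "x$1 = 0" if "Bmult l b x x = x" "Bmult l b fo x = l' *\<^sub>R x" for x
    using idem01[OF that(1)] eigen[OF that(2)] fo01 l'_pos l'_lt1 by auto
  then show "fa$1 = 0" "fb$1 = 0" using image_table by blast+
  obtain z where "f z = vo" using bij by (metis bij_def surjD)
  then have "z$1 * fo$1 = 1"
    using arg_cong[OF f_expansion[of z], of "\<lambda>v. v$1"] \<open>fa$1 = 0\<close> \<open>fb$1 = 0\<close> fc_coords
    by simp
  then show "fo$1 = 1" using fo01 by auto
qed

text \<open>Injectivity: the (a,b)-parts of f a and f b are linearly independent, since f a, f b, f c
  all lie in the hyperplane of vectors with vanishing first coordinate.\<close>

lemma ab_parts_independent: "fa$2 * fb$3 - fa$3 * fb$2 \<noteq> 0"
proof
  assume det0: "fa$2 * fb$3 - fa$3 * fb$2 = 0"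
  obtain s t where st: "(s, t) \<noteq> (0, 0)" "s * fa$2 + t * fb$2 = 0" "s * fa$3 + t * fb$3 = 0"
  proof (cases "fa$2 = 0 \<and> fa$3 = 0")
    case True
    then show ?thesis using that[of 1 0] by simp
  next
    case False
    then show ?thesis using that[of "fb$2" "- fa$2"] that[of "fb$3" "- fa$3"] det0
      by (auto simp: algebra_simps)
  qed
  have "fc \<noteq> 0"
    using bij lin by (metis basis_nth(16) bij_def inj_eq linear_0 zero_index zero_neq_one)
  then have c4: "fc$4 \<noteq> 0" using fc_coords by (auto simp: vec_eq_iff forall_4)
  have st_scaled: "s * (fa$2 * fc$4) + t * (fb$2 * fc$4) = 0"
    "s * (fa$3 * fc$4) + t * (fb$3 * fc$4) = 0"
    using st(2,3) by (metis distrib_right mult.assoc mult_zero_left)+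
  define z where "z = s *\<^sub>R va + t *\<^sub>R vb - ((s * fa$4 + t * fb$4) / fc$4) *\<^sub>R vc"
  have "f z = 0"
    using st_scaled c4 fc_coords first_coords unfolding f_expansion[of z]
    by (simp add: vec_eq_iff forall_4 z_def field_simps)
  then have "z = 0" using bij lin by (metis bij_def inj_eq linear_0)
  then have "z$2 = 0" "z$3 = 0" by simp_all
  then have "s = 0" "t = 0" by (simp_all add: z_def)
  with st(1) show False by simp
qed

text \<open>Left multiplication by f o acts as l' on span(f a, f b), and f o is idempotent; this
  forces l' = l.\<close>

lemma lambda_eq: "l' = l"
proof -
  let ?u = "fo$2" and ?v = "fo$3"
  have eigen_coords:
    "(l + ?u + p*?v - l') * x$2 + (p*?u) * x$3 = 0"
    "(q*?v) * x$2 + (l + ?v + q*?u - l') * x$3 = 0"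
    if "Bmult l b fo x = l' *\<^sub>R x" "x$1 = 0" for x
    using arg_cong[OF that(1), of "\<lambda>v. v$2"] arg_cong[OF that(1), of "\<lambda>v. v$3"]
      that(2) first_coords(1) by (simp_all add: algebra_simps)
  note action_a = eigen_coords[OF image_table(2) first_coords(2)]
  note action_b = eigen_coords[OF image_table(3) first_coords(3)]
  have row_a: "l + ?u + p*?v - l' = 0 \<and> p*?u = 0"
    by (rule cramer_2x2_homogeneous[OF ab_parts_independent action_a(1) action_b(1)])
  have row_b: "q*?v = 0 \<and> l + ?v + q*?u - l' = 0"
    by (rule cramer_2x2_homogeneous[OF ab_parts_independent action_a(2) action_b(2)])
  have idem: "?u = 2*l*?u + ?u*?u + 2*p*?u*?v" "?v = 2*l*?v + ?v*?v + 2*q*?u*?v"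
    using arg_cong[OF image_table(1), of "\<lambda>v. v$2"] arg_cong[OF image_table(1), of "\<lambda>v. v$3"]
      first_coords(1) by (simp_all add: algebra_simps)
  show ?thesis
    using unit_action_eigenvalue[OF l_pos l_lt1 coef_sum[OF l_pos] idem] row_a row_b by simp
qed

lemma beta_cases: "b' = b \<or> b' = 1 - b"
proof -
  have idem: "x$2 = x$2*x$2 + p*(x$2*x$3 + x$3*x$2)" "x$3 = x$3*x$3 + q*(x$2*x$3 + x$3*x$2)"
    if "Bmult l b x x = x" "x$1 = 0" for x
    using arg_cong[OF that(1), of "\<lambda>v. v$2"] arg_cong[OF that(1), of "\<lambda>v. v$3"] that(2)
    by simp_all
  note prod = arg_cong[OF image_table(6), of "\<lambda>v. v$2"] arg_cong[OF image_table(6), of "\<lambda>v. v$3"]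
  have "coef_b l' b' = q \<or> coef_b l' b' = p"
  proof (rule idempotent_pair_coefficient[OF idem[OF image_table(4) first_coords(2)]
        idem[OF image_table(5) first_coords(3)] _ _ _ coef_sum_lt1[OF l_pos l_lt1]
        ab_parts_independent])
    show "fa$2*fb$2 + p*(fa$2*fb$3 + fa$3*fb$2) = coef_a l' b' * fa$2 + coef_b l' b' * fb$2"
      "fa$3*fb$3 + q*(fa$2*fb$3 + fa$3*fb$2) = coef_a l' b' * fa$3 + coef_b l' b' * fb$3"
      using prod first_coords fc_coords by simp_all
    show "coef_a l' b' + coef_b l' b' = p + q"
      using lambda_eq l_pos by (simp add: coef_sum)
  qed
  then show ?thesis using lambda_eq l_pos by (auto simp: coef_a_def coef_b_def field_simps)
qed

end

theorem mainTheorem9: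
  fixes l b l' b' :: real
  assumes "0 < l" "l < 1" "0 < l'" "l' < 1" "0 < b" "b < 1" "0 < b'" "b' < 1"
  shows "(alg_iso (Bmult l' b') (Bmult l b) \<longleftrightarrow> l' = l \<and> (b' = b \<or> b' = 1 - b))
       \<and> ((l', b') \<noteq> (l, b) \<longrightarrow>
            (alg_iso (Bmult l' b') (Bmult l b) \<longleftrightarrow> l' = l \<and> b' = 1 - b))"
proof -
  have "alg_iso (Bmult l' b') (Bmult l b) \<longleftrightarrow> l' = l \<and> (b' = b \<or> b' = 1 - b)"
  proof
    assume "alg_iso (Bmult l' b') (Bmult l b)"
    then obtain f where "linear f" "bij f" "\<forall>x y. f (Bmult l' b' x y) = Bmult l b (f x) (f y)"
      unfolding alg_iso_def by blast
    then interpret iso_Bmult l b l' b' f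
      using assms by (simp add: iso_Bmult_def)
    show "l' = l \<and> (b' = b \<or> b' = 1 - b)" using lambda_eq beta_cases by blast
  next
    assume "l' = l \<and> (b' = b \<or> b' = 1 - b)"
    then show "alg_iso (Bmult l' b') (Bmult l b)"
      using iso_refl iso_swap[OF assms(1)] by auto
  qed
  then show ?thesis by auto
qed

end
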